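(* Consider an $\mathbb{H}_{2n+1}$-structure on $\mathbb{P}V$ such that $T$ fixes every point of the boundary hyperplane $\mathbb{P}V'$, with associated algebra $\mathcal{A}$, Lie algebra $\mathfrak{h}_{2n+1}=\mathfrak{w}\oplus\mathbb{C}t$, maps $\theta$ and $ev$ as in the context. Then $\theta(t)=0$, $\theta$ is injective on $\mathfrak{w}$, $\theta(\mathfrak{w})$ generates $\mathfrak{m}_{\mathcal{B}}=\theta(\mathfrak{m})$ as an associative algebra, and $\theta(\ker(ev))=0$.
   Context: Work over $\mathbb{C}$, $n\ge1$. The Heisenberg group $\mathbb{H}_{2n+1}$ is $\mathbb{W}\times\mathbb{C}$ ($\mathbb{W}$ a $2n$-dimensional space with non-degenerate skew form $\omega$) with law $(w_1,t_1)(w_2,t_2)=(w_1+w_2,t_1+t_2+\tfrac12\omega(w_1,w_2))$; $T=(0,1)$, $\mathbb{I}=\mathbb{C}T$ its center. $V\cong\mathbb{C}^{2n+2}$. An $\mathbb{H}_{2n+1}$-structure on $\mathbb{P}V$ is an effective algebraic action with dense open orbit, with boundary a hyperplane $\mathbb{P}V'$. Regard $\mathbb{H}_{2n+1}\subset\mathbb{P}\mathrm{GL}_{2n+2}(\mathbb{C})$; choosing a basis, it lies in the image of the group of unipotent upper-triangular matrices, and its Lie algebra is realized as a Lie subalgebra $\mathfrak{h}_{2n+1}$ of strictly upper-triangular matrices (commutator bracket), written $\mathfrak{h}_{2n+1}=\mathfrak{w}\oplus\mathbb{C}t$ with $\mathbb{C}t$ the center (the tangent line of $\mathbb{I}$)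 and $[\mathfrak{w},\mathfrak{w}]=\mathbb{C}t$. With $\pi:\mathrm{GL}_{2n+2}\to\mathbb{P}\mathrm{GL}_{2n+2}$ the projection, $\mathcal{A}$ is the unital associative subalgebra of $\mathrm{Mat}_{2n+2}(\mathbb{C})$ generated by $\pi^{-1}(\mathbb{H}_{2n+1})$; $\mathcal{A}=\mathbb{C}I\oplus\mathfrak{m}$ where $\mathfrak{m}$ is the associative subalgebra generated by $\mathfrak{h}_{2n+1}$. Fix $o$ in the open orbit with representative $\hat o\in V$, and let $ev:\mathcal{A}\to V$, $a\mapsto a\hat o$. Let $v=\overline{\mathbb{I}\cdot o}\setminus\mathbb{I}\cdot o$, $\hat v$ a representative, $\widetilde V=V/\mathbb{C}\hat v$. The point $v$ is fixed by $\mathbb{H}_{2n+1}$, so every element of $\mathcal{A}$ preserves $\mathbb{C}\hat v$; let $\theta:\mathcal{A}\to\mathrm{End}(\widetilde V)$ send $a$ to the induced endomorphism of $\widetilde V$, $\mathcal{B}=\theta(\mathcal{A})$ and $\mathfrak{m}_{\mathcal{B}}=\theta(\mathfrak{m})$. *)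

theory Defs
  imports "HOL-Analysis.Analysis" "HOL-Library.FuncSet"
begin

type_synonym 'm cmat = "complex ^ 'm ^ 'm"

definition msc :: "complex \<Rightarrow> 'm::finite cmat \<Rightarrow> 'm cmat" where
  "msc c M = (\<chi> i j. c * M $ i $ j)"

definition mbr :: "'m::finite cmat \<Rightarrow> 'm cmat \<Rightarrow> 'm cmat" where
  "mbr M N = M ** N - N ** M"

fun mpow :: "'m::finite cmat \<Rightarrow> nat \<Rightarrow> 'm cmat" where
  "mpow M 0 = mat 1"
| "mpow M (Suc k) = M ** mpow M k"

text \<open>Matrix exponential; exact for nilpotent matrices (X^CARD('m) = 0),
  in particular for strictly upper-triangular ones.\<close>
definition mexp :: "'m::finite cmat \<Rightarrow> 'm cmat" where
  "mexp X = (\<Sum>k<CARD('m). msc (1 / of_nat (fact k)) (mpow X k))"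

definition strict_upper :: "'m::{finite,wellorder} cmat \<Rightarrow> bool" where
  "strict_upper M \<longleftrightarrow> (\<forall>i j. j \<le> i \<longrightarrow> M $ i $ j = 0)"

inductive_set alg :: "'m::finite cmat set \<Rightarrow> 'm cmat set" for S where
  gen: "x \<in> S \<Longrightarrow> x \<in> alg S"
| zero: "0 \<in> alg S"
| add: "x \<in> alg S \<Longrightarrow> y \<in> alg S \<Longrightarrow> x + y \<in> alg S"
| sc: "x \<in> alg S \<Longrightarrow> msc c x \<in> alg S"
| mul: "x \<in> alg S \<Longrightarrow> y \<in> alg S \<Longrightarrow> x ** y \<in> alg S"

inductive_set ualg :: "'m::finite cmat set \<Rightarrow> 'm cmat set" for S where
  gen: "x \<in> S \<Longrightarrow> x \<in> ualg S"
| one: "mat 1 \<in> ualg S"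
| zero: "0 \<in> ualg S"
| add: "x \<in> ualg S \<Longrightarrow> y \<in> ualg S \<Longrightarrow> x + y \<in> ualg S"
| sc: "x \<in> ualg S \<Longrightarrow> msc c x \<in> ualg S"
| mul: "x \<in> ualg S \<Longrightarrow> y \<in> ualg S \<Longrightarrow> x ** y \<in> ualg S"

definition cline :: "complex ^ 'm \<Rightarrow> (complex ^ 'm) set" where
  "cline u = vec.span {u}"

definition projsp :: "(complex ^ 'm) set set" where
  "projsp = {cline u | u. u \<noteq> 0}"

text \<open>Closure in P V for the quotient topology of (V - 0) -> P V
  (the quotient map is open, so this is the closure).\<close>
definition pclosure :: "(complex ^ 'm) set set \<Rightarrow> (complex ^ 'm) set set" where
  "pclosure S = {cline u | u. u \<noteq> 0 \<and> u \<in> closure (\<Union> S)}"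

definition cls :: "complex ^ 'm \<Rightarrow> complex ^ 'm \<Rightarrow> (complex ^ 'm) set" where
  "cls v u = {u + c *s v | c. True}"

definition Vt :: "complex ^ 'm \<Rightarrow> (complex ^ 'm) set set" where
  "Vt v = range (cls v)"

text \<open>theta: induced endomorphism of V / C v (for a preserving C v).\<close>
definition theta :: "complex ^ 'm \<Rightarrow> 'm::finite cmat \<Rightarrow> ((complex ^ 'm) set \<Rightarrow> (complex ^ 'm) set)" where
  "theta v a = (\<lambda>U\<in>Vt v. {a *v u + c *s v | u c. u \<in> U})"

definition ezero :: "complex ^ 'm \<Rightarrow> ((complex ^ 'm) set \<Rightarrow> (complex ^ 'm) set)" where
  "ezero v = (\<lambda>U\<in>Vt v. cls v 0)"

definition eadd :: "complex ^ 'm \<Rightarrow> ((complex ^ 'm) set \<Rightarrow> (complex ^ 'm) set)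
   \<Rightarrow> ((complex ^ 'm) set \<Rightarrow> (complex ^ 'm) set) \<Rightarrow> ((complex ^ 'm) set \<Rightarrow> (complex ^ 'm) set)" where
  "eadd v f g = (\<lambda>U\<in>Vt v. {x + y | x y. x \<in> f U \<and> y \<in> g U})"

definition esc :: "complex ^ 'm \<Rightarrow> complex
   \<Rightarrow> ((complex ^ 'm) set \<Rightarrow> (complex ^ 'm) set) \<Rightarrow> ((complex ^ 'm) set \<Rightarrow> (complex ^ 'm) set)" where
  "esc v c f = (\<lambda>U\<in>Vt v. {c *s x + d *s v | x d. x \<in> f U})"

definition ecomp :: "complex ^ 'm \<Rightarrow> ((complex ^ 'm) set \<Rightarrow> (complex ^ 'm) set)
   \<Rightarrow> ((complex ^ 'm) set \<Rightarrow> (complex ^ 'm) set) \<Rightarrow> ((complex ^ 'm) set \<Rightarrow> (complex ^ 'm) set)" where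
  "ecomp v f g = (\<lambda>U\<in>Vt v. f (g U))"

inductive_set ealg :: "complex ^ 'm \<Rightarrow> ((complex ^ 'm) set \<Rightarrow> (complex ^ 'm) set) set
    \<Rightarrow> ((complex ^ 'm) set \<Rightarrow> (complex ^ 'm) set) set" for v S where
  gen: "f \<in> S \<Longrightarrow> f \<in> ealg v S"
| zero: "ezero v \<in> ealg v S"
| add: "f \<in> ealg v S \<Longrightarrow> g \<in> ealg v S \<Longrightarrow> eadd v f g \<in> ealg v S"
| sc: "f \<in> ealg v S \<Longrightarrow> esc v c f \<in> ealg v S"
| mul: "f \<in> ealg v S \<Longrightarrow> g \<in> ealg v S \<Longrightarrow> ecomp v f g \<in> ealg v S"

end

theory Submission
  imports Defs
begin

(* Since exp t fixes P V' pointwise and t is nilpotent, t vanishes on the hyperplane V'; hence t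
   has rank one with image C (t o), t^2 = 0 and exp(s t) o = o + s t o, so the boundary point v of
   the orbit of the centre is [t o]. All brackets in h are multiples of t, so h preserves C v, and
   the algebra A is commutative modulo endomorphisms with image in C v. As V = A o, an element
   killing o maps V into C v, so theta kills ker ev; theta t = 0 shows that theta(w) generates
   theta(m). For injectivity on w: a nonzero D in w mapping V into C v could replace one generator
   of w, and the open orbit would then be covered by a polynomial image of a (2n+1)-dimensional
   space in the (2n+2)-dimensional V, which is negligible. *)

lemma sum_eliminate_term:
  fixes e d g :: "'a \<Rightarrow> 'b::field"
  assumes "finite S" "j \<in> S" "d j \<noteq> 0"
  shows "(\<Sum>k\<in>S. e k * g k) - (\<Sum>k\<in>S - {j}. (e k - e j * d k / d j) * g k)
         = e j / d j * (\<Sum>k\<in>S. d k * g k)"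
proof -
  have "(\<Sum>k\<in>S - {j}. (e k - e j * d k / d j) * g k)
      = (\<Sum>k\<in>S - {j}. e k * g k) - e j / d j * (\<Sum>k\<in>S - {j}. d k * g k)"
    by (simp add: sum_subtractf[symmetric] sum_distrib_left algebra_simps)
  moreover have "(\<Sum>k\<in>S. e k * g k) = e j * g j + (\<Sum>k\<in>S - {j}. e k * g k)"
    and "(\<Sum>k\<in>S. d k * g k) = d j * g j + (\<Sum>k\<in>S - {j}. d k * g k)"
    using assms by (simp_all add: sum.remove)
  ultimately show ?thesis
    using assms(3) by (simp add: field_simps)
qed

lemma vec_lambda_inv_into_nth:
  "bij_betw \<iota> I UNIV \<Longrightarrow> k \<in> I \<Longrightarrow> (\<chi> i. F (inv_into I \<iota> i)) $ \<iota> k = F k"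
  by (simp add: bij_betw_inv_into_left)

lemma msc_one [simp]: "msc 1 (A :: 'm::finite cmat) = A"
  by (simp add: msc_def vec_eq_iff)

lemma msc_zero_left [simp]: "msc 0 (A :: 'm::finite cmat) = 0"
  by (simp add: msc_def vec_eq_iff)

lemma msc_zero_right [simp]: "msc c (0 :: 'm::finite cmat) = 0"
  by (simp add: msc_def vec_eq_iff)

lemma msc_minus_one: "msc (-1) (A :: 'm::finite cmat) = - A"
  by (simp add: msc_def vec_eq_iff)

lemma msc_matrix_mult_left: "msc c A ** B = msc c (A ** B :: 'm::finite cmat)"
  by (simp add: msc_def vec_eq_iff matrix_matrix_mult_def sum_distrib_left algebra_simps)

lemma msc_matrix_mult_right: "A ** msc c B = msc c (A ** B :: 'm::finite cmat)"
  by (simp add: msc_def vec_eq_iff matrix_matrix_mult_def sum_distrib_left algebra_simps)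

lemma msc_matrix_vector_mult: "msc c A *v u = c *s (A *v u :: complex ^ 'm::finite)"
  by (simp add: msc_def vec_eq_iff matrix_vector_mult_def sum_distrib_left algebra_simps)

lemma matrix_vector_mult_sum_left:
  fixes f :: "'i \<Rightarrow> 'a::semiring_1 ^ 'n ^ 'm"
  shows "sum f S *v u = (\<Sum>k\<in>S. f k *v u)"
  by (induction S rule: infinite_finite_induct) (auto simp: matrix_vector_mult_add_rdistrib)

lemma matrix_vector_mult_sum_right:
  fixes A :: "'a::semiring_1 ^ 'n ^ 'm"
  shows "A *v sum f S = (\<Sum>k\<in>S. A *v f k)"
  by (induction S rule: infinite_finite_induct) (auto simp: matrix_vector_right_distrib)

lemma matrix_add_rdistrib:
  fixes A B :: "'a::semiring_1 ^ 'n ^ 'm"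
  shows "(A + B) ** C = A ** C + B ** C"
  by (simp add: matrix_matrix_mult_def vec_eq_iff sum.distrib algebra_simps)

lemma matrix_diff_ldistrib:
  fixes C :: "'a::ring_1 ^ 'n ^ 'm"
  shows "C ** (A - B) = C ** A - C ** B"
  unfolding matrix_matrix_mult_def vec_eq_iff by (simp add: sum_subtractf[symmetric] algebra_simps)

lemma matrix_diff_rdistrib:
  fixes A B :: "'a::ring_1 ^ 'n ^ 'm"
  shows "(A - B) ** C = A ** C - B ** C"
  unfolding matrix_matrix_mult_def vec_eq_iff by (simp add: sum_subtractf[symmetric] algebra_simps)

lemma mbr_add_left: "mbr (A + B) C = mbr A C + mbr B (C :: 'm::finite cmat)"
  by (simp add: mbr_def matrix_add_rdistrib matrix_add_ldistrib)

lemma mbr_add_right: "mbr C (A + B) = mbr C A + mbr C (B :: 'm::finite cmat)"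
  by (simp add: mbr_def matrix_add_rdistrib matrix_add_ldistrib)

lemma mbr_msc_left: "mbr (msc c A) B = msc c (mbr A B :: 'm::finite cmat)"
  by (simp add: mbr_def msc_matrix_mult_left msc_matrix_mult_right)
     (simp add: msc_def vec_eq_iff algebra_simps)

lemma mbr_msc_right: "mbr B (msc c A) = msc c (mbr B A :: 'm::finite cmat)"
  by (simp add: mbr_def msc_matrix_mult_left msc_matrix_mult_right)
     (simp add: msc_def vec_eq_iff algebra_simps)

lemma mbr_commute: "mbr B A = msc (-1) (mbr A B :: 'm::finite cmat)"
  by (simp add: mbr_def msc_minus_one)

lemma mbr_matrix_mult_left: "mbr (A ** B) C = A ** mbr B C + mbr A C ** (B :: 'm::finite cmat)"
  by (simp add: mbr_def matrix_mul_assoc matrix_diff_ldistrib matrix_diff_rdistrib)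

lemma mbr_zero_left [simp]: "mbr 0 (C :: 'm::finite cmat) = 0"
  and mbr_zero_right [simp]: "mbr C 0 = 0"
  and mbr_one_left [simp]: "mbr (mat 1) C = 0"
  and mbr_self [simp]: "mbr C C = 0"
  by (simp_all add: mbr_def)

lemma mpow_add: "mpow M (a + b) = mpow M a ** mpow (M :: 'm::finite cmat) b"
  by (induction a) (auto simp: matrix_mul_assoc)

lemma mpow_mv_eigenvector:
  assumes "(M :: 'm::finite cmat) *v u = \<mu> *s u"
  shows "mpow M k *v u = (\<mu> ^ k) *s u"
  by (induction k) (auto simp: matrix_vector_mul_assoc[symmetric] vector_scalar_commute assms)

section \<open>Nilpotent matrices and the truncated exponential\<close>

lemma strict_upper_add: "strict_upper A \<Longrightarrow> strict_upper B \<Longrightarrow> strict_upper (A + B)"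
  and strict_upper_msc: "strict_upper A \<Longrightarrow> strict_upper (msc c A)"
  and strict_upper_zero: "strict_upper 0"
  by (simp_all add: strict_upper_def msc_def)

lemma strict_upper_mpow_nonzero_entry:
  fixes M :: "'m::{finite,wellorder} cmat"
  assumes "strict_upper M" "mpow M k $ i $ j \<noteq> 0"
  shows "i \<le> j \<and> k \<le> card {l. i \<le> l \<and> l < j}"
  using assms(2)
proof (induction k arbitrary: i)
  case 0
  then show ?case by (auto simp: mat_def split: if_splits)
next
  case (Suc k)
  have "(\<Sum>l\<in>UNIV. M $ i $ l * mpow M k $ l $ j) \<noteq> 0"
    using Suc.prems by (simp add: matrix_matrix_mult_def)
  then obtain l where l: "M $ i $ l * mpow M k $ l $ j \<noteq> 0"
    by (meson sum.neutral)
  then have il: "i < l"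
    using assms(1) unfolding strict_upper_def by (metis mult_eq_0_iff not_le)
  from l have IH: "l \<le> j \<and> k \<le> card {m. l \<le> m \<and> m < j}"
    using Suc.IH by simp
  have sub: "insert i {m. l \<le> m \<and> m < j} \<subseteq> {m. i \<le> m \<and> m < j}"
    using il IH by auto
  have "card (insert i {m. l \<le> m \<and> m < j}) = Suc (card {m. l \<le> m \<and> m < j})"
    using il by (subst card_insert_disjoint) auto
  then have "Suc k \<le> card {m. i \<le> m \<and> m < j}"
    using card_mono[OF _ sub] IH by simp
  moreover have "i \<le> j"
    using il IH by (meson less_imp_le less_le_trans)
  ultimately show ?case by simp
qed

lemma strict_upper_mpow_card:
  fixes M :: "'m::{finite,wellorder} cmat"
  assumes "strict_upper M"
  shows "mpow M CARD('m) = 0"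
proof -
  have "mpow M CARD('m) $ i $ j = 0" for i j
  proof (rule ccontr)
    assume "mpow M CARD('m) $ i $ j \<noteq> 0"
    then have "CARD('m) \<le> card {l. i \<le> l \<and> l < j}"
      using strict_upper_mpow_nonzero_entry[OF assms] by blast
    moreover have "card {l. i \<le> l \<and> l < j} < CARD('m)"
      by (rule psubset_card_mono) auto
    ultimately show False by simp
  qed
  then show ?thesis by (simp add: vec_eq_iff)
qed

lemma strict_upper_eigenvalue_zero:
  fixes M :: "'m::{finite,wellorder} cmat"
  assumes "strict_upper M" "M *v u = \<mu> *s u" "u \<noteq> 0"
  shows "\<mu> = 0"
proof -
  have "(\<mu> ^ CARD('m)) *s u = 0"
    using mpow_mv_eigenvector[OF assms(2), of "CARD('m)"] strict_upper_mpow_card[OF assms(1)]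
    by simp
  then show ?thesis using assms(3) by simp
qed

lemma mexp_mv: "mexp M *v u = (\<Sum>k<CARD('m). (1 / of_nat (fact k)) *s (mpow M k *v u))"
  for M :: "'m::finite cmat"
  by (simp add: mexp_def matrix_vector_mult_sum_left msc_matrix_vector_mult)

lemma mexp_square_zero:
  fixes M :: "'m::finite cmat"
  assumes "M ** M = 0" "CARD('m) \<ge> 2"
  shows "mexp M = mat 1 + M"
proof -
  have high: "mpow M k = 0" if "k \<ge> 2" for k
  proof -
    have k: "k = Suc (Suc (k - 2))"
      using that by simp
    have "mpow M (Suc (Suc (k - 2))) = (M ** M) ** mpow M (k - 2)"
      by (simp add: matrix_mul_assoc)
    then show ?thesis
      using k assms(1) by simp
  qed
  have "msc (1 / of_nat (fact k)) (mpow M k) = (if k = 0 then mat 1 else 0) + (if k = 1 then M else 0)"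
    for k
  proof (cases "k \<ge> 2")
    case False
    then consider "k = 0" | "k = 1" by linarith
    then show ?thesis by cases simp_all
  qed (simp add: high)
  then have "mexp M = (\<Sum>k<CARD('m). (if k = 0 then mat 1 else 0) + (if k = 1 then M else 0))"
    unfolding mexp_def by simp
  also have "\<dots> = mat 1 + M"
    using assms(2) by (simp add: sum.distrib)
  finally show ?thesis .
qed

lemma mpow_mv_mexp_two_terms:
  fixes M :: "'m::finite cmat"
  assumes "mpow M (Suc (Suc i)) *v u = 0" "CARD('m) \<ge> 2"
  shows "mpow M i *v (mexp M *v u) = mpow M i *v u + mpow M (Suc i) *v u"
proof -
  have high: "mpow M (k + i) *v u = 0" if "k \<ge> 2" for k
  proof -
    have e: "(k - 2) + Suc (Suc i) = k + i"
      using that by simp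
    have "mpow M (k + i) = mpow M (k - 2) ** mpow M (Suc (Suc i))"
      unfolding e[symmetric] by (rule mpow_add)
    then show ?thesis
      using assms(1) by (simp add: matrix_vector_mul_assoc[symmetric] del: mpow.simps)
  qed
  have "(1 / of_nat (fact k)) *s (mpow M (k + i) *v u)
      = (if k = 0 then mpow M i *v u else 0) + (if k = 1 then mpow M (Suc i) *v u else 0)" for k
  proof (cases "k \<ge> 2")
    case False
    then consider "k = 0" | "k = 1" by linarith
    then show ?thesis by cases simp_all
  qed (simp add: high)
  then have "mpow M i *v (mexp M *v u)
      = (\<Sum>k<CARD('m). (if k = 0 then mpow M i *v u else 0) + (if k = 1 then mpow M (Suc i) *v u else 0))"
    by (simp add: mexp_mv matrix_vector_mult_sum_right vector_scalar_commute
        matrix_vector_mul_assoc mpow_add[symmetric] add.commute)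
  also have "\<dots> = mpow M i *v u + mpow M (Suc i) *v u"
    using assms(2) by (simp add: sum.distrib)
  finally show ?thesis .
qed

text \<open>Look at the last nonzero vector in the chain u, M u, M (M u), \<dots>: comparing
  the two lowest terms of the truncated exponential forces the eigenvalue to be 1 and the chain to
  stop after u.\<close>
lemma strict_upper_mexp_eigenvector:
  fixes M :: "'m::{finite,wellorder} cmat"
  assumes up: "strict_upper M" and eig: "mexp M *v u = c *s u"
    and u: "u \<noteq> 0" and card: "CARD('m) \<ge> 2"
  shows "M *v u = 0"
proof -
  define j where "j = (LEAST j. mpow M j *v u = 0)"
  have j: "mpow M j *v u = 0"
    unfolding j_def by (rule LeastI[of _ "CARD('m)"]) (simp add: strict_upper_mpow_card[OF up])
  have below_j: "mpow M i *v u \<noteq> 0" if "i < j" for i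
    using that not_less_Least unfolding j_def by blast
  obtain i where ji: "j = Suc i"
    using j u by (cases j) auto
  have "mpow M (Suc (Suc i)) *v u = 0"
    using j ji by (simp add: matrix_vector_mul_assoc[symmetric])
  then have "mpow M i *v (mexp M *v u) = mpow M i *v u + mpow M (Suc i) *v u"
    by (rule mpow_mv_mexp_two_terms[OF _ card])
  then have "c *s (mpow M i *v u) = mpow M i *v u"
    using j ji by (simp add: eig vector_scalar_commute)
  then have "(c - 1) *s (mpow M i *v u) = 0"
    by (simp add: vector_sub_rdistrib)
  then have "c - 1 = 0 \<or> mpow M i *v u = 0"
    by (simp only: vector_mul_eq_0)
  moreover have "mpow M i *v u \<noteq> 0"
    using below_j[of i] ji by blast
  ultimately have c: "c = 1"
    by simp
  show ?thesis
  proof (cases i)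
    case 0
    then show ?thesis using j ji by simp
  next
    case (Suc i')
    have "mpow M i' *v (mexp M *v u) = mpow M i' *v u + mpow M (Suc i') *v u"
      using j ji Suc by (intro mpow_mv_mexp_two_terms[OF _ card]) (simp del: mpow.simps)
    then have "mpow M (Suc i') *v u = 0"
      by (simp add: eig c del: mpow.simps)
    with \<open>mpow M i *v u \<noteq> 0\<close> Suc show ?thesis
      by blast
  qed
qed

lemma cline_eq_range: "cline u = range (\<lambda>k. k *s u)"
  by (simp add: cline_def vec.span_singleton)

lemma in_cline_iff: "z \<in> cline u \<longleftrightarrow> (\<exists>c. z = c *s u)"
  by (auto simp: cline_eq_range)

lemma cline_add: "a \<in> cline v \<Longrightarrow> b \<in> cline v \<Longrightarrow> a + b \<in> cline v"
  and cline_diff: "a \<in> cline v \<Longrightarrow> b \<in> cline v \<Longrightarrow> a - b \<in> cline v"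
  and cline_smult: "a \<in> cline v \<Longrightarrow> c *s a \<in> cline v"
  and cline_zero [simp]: "0 \<in> cline v"
  and cline_self [simp]: "v \<in> cline v"
  by (simp_all add: cline_def vec.span_add vec.span_diff vec.span_scale vec.span_zero vec.span_base)

lemma cline_minus_iff: "- a \<in> cline v \<longleftrightarrow> a \<in> cline v"
  using cline_diff[OF cline_zero, of _ v] by (metis diff_0 minus_minus)

lemma cline_sum: "(\<And>k. k \<in> S \<Longrightarrow> f k \<in> cline v) \<Longrightarrow> sum f S \<in> cline v"
  unfolding cline_def by (rule vec.span_sum)

lemma cline_eq_imp_smult: "cline u = cline w \<Longrightarrow> \<exists>c. w = c *s u"
  by (metis cline_self in_cline_iff)

lemma cline_smult_cancel: "c \<noteq> 0 \<Longrightarrow> cline (c *s u) = cline u"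
  unfolding cline_eq_range
proof (rule set_eqI, rule iffI)
  fix z assume "z \<in> range (\<lambda>k. k *s (c *s u))"
  then show "z \<in> range (\<lambda>k. k *s u)" by (auto simp: vector_smult_assoc)
next
  fix z assume c: "c \<noteq> 0" and "z \<in> range (\<lambda>k. k *s u)"
  then obtain k where "z = k *s u" by auto
  then have "z = (k / c) *s (c *s u)" using c by (simp add: vector_smult_assoc)
  then show "z \<in> range (\<lambda>k. k *s (c *s u))" by blast
qed

lemma scaleR_eq_vector_scalar_mult: "r *\<^sub>R z = (of_real r :: complex) *s (z :: complex ^ 'n)"
  by (simp add: vec_eq_iff) (simp add: scaleR_conv_of_real)

lemma subspace_if_vec_subspace: "vec.subspace S \<Longrightarrow> subspace (S :: (complex ^ 'n) set)"
  by (simp add: subspace_def vec.subspace_def scaleR_eq_vector_scalar_mult)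

lemma closed_vec_span: "closed (vec.span (S :: (complex ^ 'n) set))"
  by (intro closed_subspace subspace_if_vec_subspace vec.subspace_span)

lemma cls_mem_iff: "z \<in> cls v u \<longleftrightarrow> z - u \<in> cline v"
proof
  assume "z \<in> cls v u"
  then obtain c where "z = u + c *s v" by (auto simp: cls_def)
  then show "z - u \<in> cline v" by (simp add: in_cline_iff)
next
  assume "z - u \<in> cline v"
  then obtain c where "z - u = c *s v" by (auto simp: in_cline_iff)
  then have "z = u + c *s v" by (simp add: diff_eq_eq add.commute)
  then show "z \<in> cls v u" by (auto simp: cls_def)
qed

lemma cls_eq_iff: "cls v u = cls v u' \<longleftrightarrow> u' - u \<in> cline v"
proof
  assume "cls v u = cls v u'"
  then have "u' \<in> cls v u" by (simp add: cls_mem_iff)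
  then show "u' - u \<in> cline v" by (simp add: cls_mem_iff)
next
  assume d: "u' - u \<in> cline v"
  have "z - u' \<in> cline v \<longleftrightarrow> z - u \<in> cline v" for z
    using cline_diff[of "z - u" v "u' - u"] cline_add[of "z - u'" v "u' - u"] d
    by (auto simp: algebra_simps)
  then show "cls v u = cls v u'" by (auto simp: cls_mem_iff)
qed

lemma cls_in_Vt [simp]: "cls v u \<in> Vt v"
  by (simp add: Vt_def)

lemma Vt_fun_eqI:
  assumes "\<And>u. f (cls v u) = g (cls v u)"
    and "\<And>U. U \<notin> Vt v \<Longrightarrow> f U = undefined" "\<And>U. U \<notin> Vt v \<Longrightarrow> g U = undefined"
  shows "f = g"
proof
  fix U show "f U = g U"
    by (cases "U \<in> Vt v") (auto simp: Vt_def assms)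
qed

lemma cls_plus: "{x + y | x y. x \<in> cls v p \<and> y \<in> cls v q} = cls v (p + q)"
proof (rule set_eqI, rule iffI)
  fix z assume "z \<in> {x + y | x y. x \<in> cls v p \<and> y \<in> cls v q}"
  then obtain x y where "z = x + y" "x - p \<in> cline v" "y - q \<in> cline v"
    by (auto simp: cls_mem_iff)
  then show "z \<in> cls v (p + q)"
    using cline_add[of "x - p" v "y - q"] by (simp add: cls_mem_iff algebra_simps)
next
  fix z assume "z \<in> cls v (p + q)"
  then have "z - q \<in> cls v p" "q \<in> cls v q"
    by (simp_all add: cls_mem_iff algebra_simps)
  moreover have "z = (z - q) + q"
    by simp
  ultimately show "z \<in> {x + y | x y. x \<in> cls v p \<and> y \<in> cls v q}"
    by blast
qed

lemma cls_scale: "{c *s x + d *s v | x d. x \<in> cls v p} = cls v (c *s p)"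
proof (rule set_eqI, rule iffI)
  fix z assume "z \<in> {c *s x + d *s v | x d. x \<in> cls v p}"
  then obtain x d where "z = c *s x + d *s v" "x - p \<in> cline v"
    by (auto simp: cls_mem_iff)
  then show "z \<in> cls v (c *s p)"
    using cline_add[OF cline_smult[of "x - p" v c] cline_smult[OF cline_self, of d v]]
    by (simp add: cls_mem_iff algebra_simps vector_ssub_ldistrib)
next
  fix z assume "z \<in> cls v (c *s p)"
  then obtain d where "z - c *s p = d *s v"
    by (auto simp: cls_mem_iff in_cline_iff)
  then have "z = c *s p + d *s v"
    by (simp add: diff_eq_eq add.commute)
  moreover have "p \<in> cls v p"
    by (simp add: cls_mem_iff)
  ultimately show "z \<in> {c *s x + d *s v | x d. x \<in> cls v p}"
    by blast
qed

definition preserves_line :: "complex ^ 'm \<Rightarrow> 'm::finite cmat \<Rightarrow> bool" where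
  "preserves_line v a \<longleftrightarrow> a *v v \<in> cline v"

definition maps_into_line :: "complex ^ 'm \<Rightarrow> 'm::finite cmat \<Rightarrow> bool" where
  "maps_into_line v a \<longleftrightarrow> (\<forall>u. a *v u \<in> cline v)"

lemma preserves_line_cline: "preserves_line v a \<Longrightarrow> z \<in> cline v \<Longrightarrow> a *v z \<in> cline v"
  by (auto simp: preserves_line_def in_cline_iff vector_scalar_commute vector_smult_assoc)

lemma preserves_line_add: "preserves_line v a \<Longrightarrow> preserves_line v b \<Longrightarrow> preserves_line v (a + b)"
  and preserves_line_msc: "preserves_line v a \<Longrightarrow> preserves_line v (msc c a)"
  and preserves_line_zero: "preserves_line v 0"
  and preserves_line_one: "preserves_line v (mat 1)"
  by (simp_all add: preserves_line_def matrix_vector_mult_add_rdistrib cline_add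
      msc_matrix_vector_mult cline_smult)

lemma preserves_line_mult: "preserves_line v a \<Longrightarrow> preserves_line v b \<Longrightarrow> preserves_line v (a ** b)"
  unfolding preserves_line_def[of v "a ** b"]
  by (simp add: matrix_vector_mul_assoc[symmetric] preserves_line_cline preserves_line_def[of v b])

lemma maps_into_line_add: "maps_into_line v a \<Longrightarrow> maps_into_line v b \<Longrightarrow> maps_into_line v (a + b)"
  and maps_into_line_msc: "maps_into_line v a \<Longrightarrow> maps_into_line v (msc c a)"
  and maps_into_line_zero: "maps_into_line v 0"
  and maps_into_line_mult_right: "maps_into_line v a \<Longrightarrow> maps_into_line v (a ** b)"
  and maps_into_line_mult_left:
    "preserves_line v b \<Longrightarrow> maps_into_line v a \<Longrightarrow> maps_into_line v (b ** a)"
  by (simp_all add: maps_into_line_def matrix_vector_mult_add_rdistrib cline_add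
      msc_matrix_vector_mult cline_smult matrix_vector_mul_assoc[symmetric] preserves_line_cline)

lemma maps_into_line_mbr_commute: "maps_into_line v (mbr a b) \<Longrightarrow> maps_into_line v (mbr b a)"
  by (subst mbr_commute) (rule maps_into_line_msc)

lemma mexp_mv_diff_in_cline:
  fixes M N :: "'m::finite cmat"
  assumes Mv: "M *v v = 0" and MN: "maps_into_line v (M - N)"
  shows "mexp M *v u - mexp N *v u \<in> cline v"
proof -
  have pow: "mpow M k *v u - mpow N k *v u \<in> cline v" for k
  proof (induction k)
    case (Suc k)
    then obtain \<beta> where \<beta>: "mpow M k *v u - mpow N k *v u = \<beta> *s v"
      by (auto simp: in_cline_iff)
    have "mpow M (Suc k) *v u - mpow N (Suc k) *v u
        = M *v (mpow M k *v u - mpow N k *v u) + (M - N) *v (mpow N k *v u)"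
      by (simp add: matrix_vector_mul_assoc[symmetric] matrix_vector_mult_diff_distrib
          matrix_vector_mult_diff_rdistrib)
    also have "M *v (mpow M k *v u - mpow N k *v u) = 0"
      by (simp add: \<beta> vector_scalar_commute Mv)
    finally show ?case
      using MN by (simp add: maps_into_line_def)
  qed simp
  have "mexp M *v u - mexp N *v u
      = (\<Sum>k<CARD('m). (1 / of_nat (fact k)) *s (mpow M k *v u - mpow N k *v u))"
    by (simp add: mexp_mv sum_subtractf[symmetric] vector_ssub_ldistrib)
  also have "\<dots> \<in> cline v"
    by (intro cline_sum cline_smult pow)
  finally show ?thesis .
qed

lemma theta_cls:
  assumes "preserves_line v a"
  shows "theta v a (cls v u) = cls v (a *v u)"
proof (rule set_eqI, rule iffI)
  fix z assume "z \<in> theta v a (cls v u)"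
  then obtain u' c where z: "z = a *v u' + c *s v" and u': "u' - u \<in> cline v"
    by (auto simp: theta_def cls_mem_iff)
  from u' have "a *v (u' - u) \<in> cline v"
    by (rule preserves_line_cline[OF assms])
  then have "(a *v u' - a *v u) + c *s v \<in> cline v"
    by (simp add: matrix_vector_mult_diff_distrib cline_add cline_smult)
  then show "z \<in> cls v (a *v u)"
    by (simp add: z cls_mem_iff algebra_simps)
next
  fix z assume "z \<in> cls v (a *v u)"
  then obtain c where "z - a *v u = c *s v"
    by (auto simp: cls_mem_iff in_cline_iff)
  then have "z = a *v u + c *s v"
    by (simp add: diff_eq_eq add.commute)
  moreover have "u \<in> cls v u"
    by (simp add: cls_mem_iff)
  ultimately show "z \<in> theta v a (cls v u)"
    by (auto simp: theta_def)
qed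

lemma theta_outside: "U \<notin> Vt v \<Longrightarrow> theta v a U = undefined"
  by (simp add: theta_def)

lemma theta_add:
  "preserves_line v a \<Longrightarrow> preserves_line v b \<Longrightarrow> theta v (a + b) = eadd v (theta v a) (theta v b)"
  by (rule Vt_fun_eqI[where v = v])
     (simp_all add: eadd_def theta_outside theta_cls preserves_line_add cls_plus
       matrix_vector_mult_add_rdistrib)

lemma theta_msc: "preserves_line v a \<Longrightarrow> theta v (msc c a) = esc v c (theta v a)"
proof (rule Vt_fun_eqI[where v = v])
  fix u assume a: "preserves_line v a"
  show "theta v (msc c a) (cls v u) = esc v c (theta v a) (cls v u)"
    using cls_scale[of c v "a *v u"]
    by (simp add: esc_def theta_cls a preserves_line_msc msc_matrix_vector_mult)
qed (simp_all add: esc_def theta_outside)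

lemma theta_mult:
  "preserves_line v a \<Longrightarrow> preserves_line v b \<Longrightarrow> theta v (a ** b) = ecomp v (theta v a) (theta v b)"
  by (rule Vt_fun_eqI[where v = v])
     (simp_all add: ecomp_def theta_outside theta_cls preserves_line_mult matrix_vector_mul_assoc)

lemma theta_zero: "theta v 0 = ezero v"
  by (rule Vt_fun_eqI[where v = v]) (simp_all add: ezero_def theta_outside theta_cls preserves_line_zero)

lemma theta_eq_iff:
  assumes "preserves_line v a" "preserves_line v b"
  shows "theta v a = theta v b \<longleftrightarrow> maps_into_line v (a - b)"
proof -
  have cls_eq: "cls v (a *v u) = cls v (b *v u) \<longleftrightarrow> (a - b) *v u \<in> cline v" for u
    using cline_minus_iff[of "a *v u - b *v u" v]
    by (simp add: cls_eq_iff matrix_vector_mult_diff_rdistrib)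
  show ?thesis
  proof
    assume "theta v a = theta v b"
    then have "cls v (a *v u) = cls v (b *v u)" for u
      by (metis theta_cls assms)
    then show "maps_into_line v (a - b)"
      by (simp add: maps_into_line_def cls_eq)
  next
    assume "maps_into_line v (a - b)"
    then show "theta v a = theta v b"
      by (intro Vt_fun_eqI[where v = v]) (simp_all add: maps_into_line_def theta_cls assms
          cls_eq theta_outside)
  qed
qed

lemma theta_eq_ezero_iff: "preserves_line v a \<Longrightarrow> theta v a = ezero v \<longleftrightarrow> maps_into_line v a"
  using theta_eq_iff[OF _ preserves_line_zero] by (simp add: theta_zero)

lemma alg_preserves_line:
  "(\<And>a. a \<in> S \<Longrightarrow> preserves_line v a) \<Longrightarrow> a \<in> alg S \<Longrightarrow> preserves_line v a"
  by (erule alg.induct)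
     (auto intro: preserves_line_zero preserves_line_add preserves_line_msc preserves_line_mult)

lemma theta_image_alg:
  assumes pres: "\<And>a. a \<in> S \<Longrightarrow> preserves_line v a"
  shows "theta v ` alg S = ealg v (theta v ` S)"
proof
  have "theta v a \<in> ealg v (theta v ` S)" if "a \<in> alg S" for a
    using that
  proof (induction rule: alg.induct)
    case zero
    show ?case by (simp add: theta_zero ealg.zero)
  next
    case (add a b)
    then show ?case by (simp add: theta_add alg_preserves_line[OF pres] ealg.add)
  next
    case (sc a c)
    then show ?case by (simp add: theta_msc alg_preserves_line[OF pres] ealg.sc)
  next
    case (mul a b)
    then show ?case by (simp add: theta_mult alg_preserves_line[OF pres] ealg.mul)
  qed (auto intro: ealg.gen)
  then show "theta v ` alg S \<subseteq> ealg v (theta v ` S)"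
    by blast
next
  show "ealg v (theta v ` S) \<subseteq> theta v ` alg S"
  proof
    fix f assume "f \<in> ealg v (theta v ` S)"
    then show "f \<in> theta v ` alg S"
    proof (induction rule: ealg.induct)
      case zero
      show ?case using theta_zero alg.zero by (metis image_eqI)
    next
      case (add f g)
      then obtain a b where ab: "a \<in> alg S" "b \<in> alg S" "f = theta v a" "g = theta v b"
        by auto
      then have "eadd v f g = theta v (a + b)"
        by (simp add: theta_add alg_preserves_line[OF pres])
      then show ?case
        using ab alg.add by blast
    next
      case (sc f c)
      then obtain a where a: "a \<in> alg S" "f = theta v a"
        by auto
      then have "esc v c f = theta v (msc c a)"
        by (simp add: theta_msc alg_preserves_line[OF pres])
      then show ?case
        using a alg.sc by blast
    next
      case (mul f g)
      then obtain a b where ab: "a \<in> alg S" "b \<in> alg S" "f = theta v a" "g = theta v b"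
        by auto
      then have "ecomp v f g = theta v (a ** b)"
        by (simp add: theta_mult alg_preserves_line[OF pres])
      then show ?case
        using ab alg.mul by blast
    qed (auto intro: alg.gen)
  qed
qed

section \<open>Commutativity modulo a line\<close>

definition centralizer_mod :: "complex ^ 'm \<Rightarrow> 'm::finite cmat set \<Rightarrow> 'm cmat set" where
  "centralizer_mod v Q = {M. preserves_line v M \<and> (\<forall>N\<in>Q. maps_into_line v (mbr M N))}"

definition scaled_exps :: "'m::finite cmat set \<Rightarrow> 'm cmat set" where
  "scaled_exps S = {msc c (mexp X) | c X. c \<noteq> 0 \<and> X \<in> S}"

lemma centralizer_mod_zero: "0 \<in> centralizer_mod v Q"
  and centralizer_mod_one: "mat 1 \<in> centralizer_mod v Q"
  and centralizer_mod_add: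
    "A \<in> centralizer_mod v Q \<Longrightarrow> B \<in> centralizer_mod v Q \<Longrightarrow> A + B \<in> centralizer_mod v Q"
  and centralizer_mod_msc: "A \<in> centralizer_mod v Q \<Longrightarrow> msc c A \<in> centralizer_mod v Q"
  and centralizer_mod_mult:
    "A \<in> centralizer_mod v Q \<Longrightarrow> B \<in> centralizer_mod v Q \<Longrightarrow> A ** B \<in> centralizer_mod v Q"
  by (simp_all add: centralizer_mod_def preserves_line_zero preserves_line_one preserves_line_add
      preserves_line_msc preserves_line_mult maps_into_line_zero maps_into_line_add maps_into_line_msc
      maps_into_line_mult_left maps_into_line_mult_right mbr_add_left mbr_msc_left mbr_matrix_mult_left)

lemma centralizer_mod_sum:
  "(\<And>k. k \<in> K \<Longrightarrow> f k \<in> centralizer_mod v Q) \<Longrightarrow> sum f K \<in> centralizer_mod v Q"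
  by (induction K rule: infinite_finite_induct) (auto intro: centralizer_mod_zero centralizer_mod_add)

lemma centralizer_mod_mexp: "A \<in> centralizer_mod v Q \<Longrightarrow> mexp A \<in> centralizer_mod v Q"
proof -
  assume A: "A \<in> centralizer_mod v Q"
  have "mpow A k \<in> centralizer_mod v Q" for k
    by (induction k) (auto intro: centralizer_mod_one centralizer_mod_mult A)
  then show ?thesis
    unfolding mexp_def by (intro centralizer_mod_sum centralizer_mod_msc)
qed

lemma ualg_scaled_exps_subset_centralizer_mod:
  assumes "S \<subseteq> centralizer_mod v Q"
  shows "ualg (scaled_exps S) \<subseteq> centralizer_mod v Q"
proof
  fix a assume "a \<in> ualg (scaled_exps S)"
  then show "a \<in> centralizer_mod v Q"
  proof (induction rule: ualg.induct)
    case (gen a)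
    then show ?case
      using assms by (auto simp: scaled_exps_def intro!: centralizer_mod_msc centralizer_mod_mexp)
  qed (auto intro: centralizer_mod_zero centralizer_mod_one centralizer_mod_add centralizer_mod_msc
      centralizer_mod_mult)
qed

lemma ualg_scaled_exps_preserves_line:
  "(\<And>X. X \<in> S \<Longrightarrow> preserves_line v X) \<Longrightarrow> a \<in> ualg (scaled_exps S) \<Longrightarrow> preserves_line v a"
  using ualg_scaled_exps_subset_centralizer_mod[of S v "{}"] by (auto simp: centralizer_mod_def)

text \<open>If the brackets of S land in the line, then S lies in its own centralizer modulo the line
  and, by antisymmetry of the bracket, also in the centralizer of that centralizer; passing to the
  generated algebras twice gives commutativity modulo the line.\<close>
lemma ualg_scaled_exps_commute_mod_line:
  assumes pres: "\<And>X. X \<in> S \<Longrightarrow> preserves_line v X"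
    and br: "\<And>X Y. X \<in> S \<Longrightarrow> Y \<in> S \<Longrightarrow> maps_into_line v (mbr X Y)"
    and a: "a \<in> ualg (scaled_exps S)" and b: "b \<in> ualg (scaled_exps S)"
  shows "maps_into_line v (mbr a b)"
proof -
  have "S \<subseteq> centralizer_mod v S"
    using pres br by (auto simp: centralizer_mod_def)
  then have "b \<in> centralizer_mod v S"
    using ualg_scaled_exps_subset_centralizer_mod b by blast
  have "S \<subseteq> centralizer_mod v (centralizer_mod v S)"
    using pres by (auto simp: centralizer_mod_def intro: maps_into_line_mbr_commute)
  then have "a \<in> centralizer_mod v (centralizer_mod v S)"
    using ualg_scaled_exps_subset_centralizer_mod a by blast
  with \<open>b \<in> centralizer_mod v S\<close> show ?thesis
    by (simp add: centralizer_mod_def)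
qed

lemma theta_vanishes_on_annihilator:
  assumes pres: "\<And>X. X \<in> S \<Longrightarrow> preserves_line v X"
    and br: "\<And>X Y. X \<in> S \<Longrightarrow> Y \<in> S \<Longrightarrow> maps_into_line v (mbr X Y)"
    and cyclic: "\<And>u. \<exists>b \<in> ualg (scaled_exps S). u = b *v p"
    and a: "a \<in> ualg (scaled_exps S)" and ap: "a *v p = 0"
  shows "theta v a = ezero v"
proof -
  have "a *v u \<in> cline v" for u
  proof -
    obtain b where b: "b \<in> ualg (scaled_exps S)" "u = b *v p"
      using cyclic by blast
    have "a *v u = b *v (a *v p) + mbr a b *v p"
      by (simp add: b(2) mbr_def matrix_vector_mul_assoc matrix_vector_mult_diff_rdistrib)
    also have "\<dots> = mbr a b *v p"
      by (simp add: ap)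
    also have "\<dots> \<in> cline v"
      using ualg_scaled_exps_commute_mod_line[OF pres br a b(1)] by (simp add: maps_into_line_def)
    finally show ?thesis .
  qed
  then show ?thesis
    using theta_eq_ezero_iff[OF ualg_scaled_exps_preserves_line[OF pres a]]
    by (simp add: maps_into_line_def)
qed

section \<open>Polynomial maps and negligible images\<close>

lemma polynomial_function_vec_lambda:
  fixes F :: "'a::real_normed_vector \<Rightarrow> 'b::euclidean_space ^ 'n"
  assumes "\<And>i. polynomial_function (\<lambda>z. F z $ i)"
  shows "polynomial_function F"
  using assms by (auto simp: polynomial_function_iff_Basis_inner Basis_vec_def inner_axis)

lemma polynomial_function_vec_nth:
  fixes F :: "'a::real_normed_vector \<Rightarrow> 'b::euclidean_space ^ 'n"
  assumes "polynomial_function F"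
  shows "polynomial_function (\<lambda>z. F z $ i)"
  using polynomial_function_compose[OF assms polynomial_function_bounded_linear[OF bounded_linear_vec_nth]]
  by (simp add: o_def)

lemma polynomial_function_complex_mult:
  fixes f g :: "'a::real_normed_vector \<Rightarrow> complex"
  assumes f: "polynomial_function f" and g: "polynomial_function g"
  shows "polynomial_function (\<lambda>x. f x * g x)"
proof -
  have parts: "real_polynomial_function (\<lambda>x. Re (h x))" "real_polynomial_function (\<lambda>x. Im (h x))"
    if "polynomial_function h" for h :: "'a \<Rightarrow> complex"
    using that by (auto simp: polynomial_function_iff_Basis_inner Basis_complex_def inner_complex_def)
  show ?thesis
    using parts[OF f] parts[OF g]
    by (auto simp: polynomial_function_iff_Basis_inner Basis_complex_def inner_complex_def
        intro!: real_polynomial_function_diff real_polynomial_function.intros(3,4))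
qed

lemma polynomial_function_msc:
  fixes F :: "'a::real_normed_vector \<Rightarrow> 'm::finite cmat"
  assumes "polynomial_function c" "polynomial_function F"
  shows "polynomial_function (\<lambda>z. msc (c z) (F z))"
  by (intro polynomial_function_vec_lambda)
     (simp add: msc_def assms polynomial_function_complex_mult polynomial_function_vec_nth)

lemma polynomial_function_matrix_mult:
  fixes F G :: "'a::real_normed_vector \<Rightarrow> 'm::finite cmat"
  assumes "polynomial_function F" "polynomial_function G"
  shows "polynomial_function (\<lambda>z. F z ** G z)"
  by (intro polynomial_function_vec_lambda)
     (auto simp: matrix_matrix_mult_def assms
       intro!: polynomial_function_sum polynomial_function_complex_mult polynomial_function_vec_nth)

lemma polynomial_function_matrix_vector_mult:
  fixes F :: "'a::real_normed_vector \<Rightarrow> 'm::finite cmat"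
  assumes "polynomial_function F"
  shows "polynomial_function (\<lambda>z. F z *v u)"
  by (intro polynomial_function_vec_lambda)
     (auto simp: matrix_vector_mult_def assms
       intro!: polynomial_function_sum polynomial_function_complex_mult polynomial_function_vec_nth)

lemma polynomial_function_mexp:
  fixes F :: "'a::real_normed_vector \<Rightarrow> 'm::finite cmat"
  assumes "polynomial_function F"
  shows "polynomial_function (\<lambda>z. mexp (F z))"
proof -
  have "polynomial_function (\<lambda>z. mpow (F z) k)" for k
    by (induction k) (auto intro: polynomial_function_matrix_mult assms)
  then show ?thesis
    unfolding mexp_def by (auto intro!: polynomial_function_sum polynomial_function_msc)
qed

lemma negligible_proper_vec_subspace:
  fixes V :: "(complex ^ 'n) set"
  assumes "vec.subspace V" "V \<noteq> UNIV"
  shows "negligible V"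
proof (rule negligible_lowdim)
  have "span V \<noteq> UNIV"
    using assms subspace_if_vec_subspace by (metis span_eq_iff)
  then have "dim V \<noteq> DIM(complex ^ 'n)"
    using dim_eq_full by blast
  then show "dim V < DIM(complex ^ 'n)"
    using dim_subset_UNIV[of V] by simp
qed

lemma negligible_polynomial_image_coordinate_hyperplane:
  fixes f :: "complex ^ 'n \<Rightarrow> complex ^ 'n"
  assumes "polynomial_function f"
  shows "negligible (f ` {z. z $ p = 0})"
proof (rule negligible_differentiable_image_negligible[OF order_refl])
  have "negligible {z :: complex ^ 'n. z \<bullet> axis p 1 = 0}"
    by (rule negligible_standard_hyperplane) (simp add: Basis_complex_def)
  then show "negligible {z :: complex ^ 'n. z $ p = 0}"
    by (rule negligible_subset) (auto simp: inner_axis)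
  show "f differentiable_on {z. z $ p = 0}"
    by (rule differentiable_on_polynomial_function[OF assms])
qed

locale heisenberg_structure =
  fixes n :: nat
    and x y :: "nat \<Rightarrow> ('m::{finite,wellorder}) cmat"
    and t :: "('m::{finite,wellorder}) cmat"
    and w h :: "('m::{finite,wellorder}) cmat set"
    and V' :: "(complex ^ ('m::{finite,wellorder})) set"
    and oh vh :: "complex ^ ('m::{finite,wellorder})"
  assumes dimV: "CARD('m) = 2 * n + 2"
    and upper: "strict_upper t" "\<And>i. i < n \<Longrightarrow> strict_upper (x i)"
      "\<And>i. i < n \<Longrightarrow> strict_upper (y i)"
    and br_xx: "\<And>i j. i < n \<Longrightarrow> j < n \<Longrightarrow> mbr (x i) (x j) = 0"
    and br_yy: "\<And>i j. i < n \<Longrightarrow> j < n \<Longrightarrow> mbr (y i) (y j) = 0"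
    and br_xy: "\<And>i j. i < n \<Longrightarrow> j < n \<Longrightarrow> mbr (x i) (y j) = (if i = j then t else 0)"
    and br_xt: "\<And>i. i < n \<Longrightarrow> mbr (x i) t = 0"
    and br_yt: "\<And>i. i < n \<Longrightarrow> mbr (y i) t = 0"
    and w_def: "w = {(\<Sum>i<n. msc (a i) (x i) + msc (b i) (y i)) | a b. True}"
    and h_def: "h = {X + msc c t | X c. X \<in> w}"
    and hyperplane: "vec.subspace V'" "vec.dim V' = CARD('m) - 1"
    and orbit: "{cline (mexp X *v oh) | X. X \<in> h} = {cline u | u. u \<noteq> 0 \<and> u \<notin> V'}"
    and T_fix: "\<And>u. u \<in> V' \<Longrightarrow> u \<noteq> 0 \<Longrightarrow> cline (mexp t *v u) = cline u"
    and vh_nz: "vh \<noteq> 0"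
    and v_def: "pclosure {cline (mexp (msc s t) *v oh) | s. True}
                 - {cline (mexp (msc s t) *v oh) | s. True} = {cline vh}"
begin

lemma card_ge_2: "CARD('m) \<ge> 2"
  using dimV by simp

definition h_generators :: "'m cmat set" where
  "h_generators = {x i | i. i < n} \<union> {y i | i. i < n} \<union> {t}"

lemma h_subset:
  assumes zero: "0 \<in> K" and add: "\<And>A B. A \<in> K \<Longrightarrow> B \<in> K \<Longrightarrow> A + B \<in> K"
    and sc: "\<And>c A. A \<in> K \<Longrightarrow> msc c A \<in> K" and gens: "h_generators \<subseteq> K"
  shows "h \<subseteq> K"
proof
  have sum: "sum f I \<in> K" if "\<And>i. i \<in> I \<Longrightarrow> f i \<in> K"
    for I and f :: "nat \<Rightarrow> ('m::{finite,wellorder}) cmat"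
    using that by (induction I rule: infinite_finite_induct) (auto intro: zero add)
  fix X assume "X \<in> h"
  then obtain a b c where "X = (\<Sum>i<n. msc (a i) (x i) + msc (b i) (y i)) + msc c t"
    by (auto simp: h_def w_def)
  then show "X \<in> K"
    using gens by (auto simp: h_generators_def intro!: sum add sc)
qed

lemma zero_in_w: "0 \<in> w"
  unfolding w_def by (rule CollectI, rule exI[of _ "\<lambda>_. 0"], rule exI[of _ "\<lambda>_. 0"]) simp

lemma w_subset_h: "w \<subseteq> h"
proof
  fix X assume "X \<in> w"
  then show "X \<in> h"
    unfolding h_def by (intro CollectI exI[of _ X] exI[of _ 0]) simp
qed

lemma t_in_h: "t \<in> h"
  unfolding h_def using zero_in_w by (intro CollectI exI[of _ 0] exI[of _ 1]) simp

lemma zero_in_h: "0 \<in> h"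
  using w_subset_h zero_in_w by blast

lemma h_strict_upper: "X \<in> h \<Longrightarrow> strict_upper X"
proof -
  have "h \<subseteq> Collect strict_upper"
    by (rule h_subset)
       (auto simp: h_generators_def strict_upper_zero strict_upper_add strict_upper_msc upper)
  then show "X \<in> h \<Longrightarrow> strict_upper X"
    by blast
qed

lemma w_diff: "A \<in> w \<Longrightarrow> B \<in> w \<Longrightarrow> A - B \<in> w"
proof -
  assume "A \<in> w" "B \<in> w"
  then obtain a b a' b' where A: "A = (\<Sum>i<n. msc (a i) (x i) + msc (b i) (y i))"
    and B: "B = (\<Sum>i<n. msc (a' i) (x i) + msc (b' i) (y i))"
    by (auto simp: w_def)
  have "A - B = (\<Sum>i<n. msc (a i - a' i) (x i) + msc (b i - b' i) (y i))"
    unfolding A B sum_subtractf[symmetric]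
    by (rule sum.cong) (auto simp: msc_def vec_eq_iff algebra_simps)
  then show ?thesis
    unfolding w_def by (intro CollectI exI[of _ "\<lambda>i. a i - a' i"] exI[of _ "\<lambda>i. b i - b' i"]) simp
qed

definition w_basis :: "nat \<Rightarrow> 'm cmat" where
  "w_basis k = (if k < n then x k else y (k - n))"

lemma w_basis_sum: "X \<in> w \<Longrightarrow> \<exists>c. X = (\<Sum>k<2*n. msc (c k) (w_basis k))"
proof -
  assume "X \<in> w"
  then obtain a b where X: "X = (\<Sum>i<n. msc (a i) (x i) + msc (b i) (y i))"
    by (auto simp: w_def)
  define c where "c k = (if k < n then a k else b (k - n))" for k
  have split: "{..<2*n} = {..<n} \<union> {n..<2*n}"
    by auto
  have "(\<Sum>k<2*n. msc (c k) (w_basis k))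
      = (\<Sum>k<n. msc (c k) (w_basis k)) + (\<Sum>k\<in>{n..<2*n}. msc (c k) (w_basis k))"
    unfolding split by (rule sum.union_disjoint) auto
  also have "(\<Sum>k\<in>{n..<2*n}. msc (c k) (w_basis k)) = (\<Sum>i<n. msc (c (i + n)) (w_basis (i + n)))"
    by (rule sum.reindex_bij_witness[of _ "\<lambda>i. i + n" "\<lambda>k. k - n"]) auto
  finally have "(\<Sum>k<2*n. msc (c k) (w_basis k)) = X"
    by (simp add: X c_def w_basis_def sum.distrib)
  then show ?thesis
    by metis
qed

lemma oh_notin_V': "oh \<notin> V'"
proof
  assume oh: "oh \<in> V'"
  have "mexp 0 = (mat 1 :: ('m::{finite,wellorder}) cmat)"
    using mexp_square_zero[of "0 :: ('m::{finite,wellorder}) cmat"] card_ge_2 by simp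
  then have "cline oh \<in> {cline (mexp X *v oh) | X. X \<in> h}"
    using zero_in_h by force
  then obtain u where u: "cline oh = cline u" "u \<noteq> 0" "u \<notin> V'"
    using orbit by auto
  obtain c where "u = c *s oh"
    using cline_eq_imp_smult[OF u(1)] by blast
  then have "u \<in> V'"
    using oh hyperplane(1) by (simp add: vec.subspace_scale)
  then show False
    using u by simp
qed

lemma V'_complement: "\<exists>\<alpha>. u - \<alpha> *s oh \<in> V'"
proof -
  have span: "vec.span V' = V'"
    using hyperplane(1) by (simp add: vec.span_eq_iff)
  have "vec.dim (insert oh V') = vec.dim V' + 1"
    using oh_notin_V' by (simp add: vec.dim_insert span)
  also have "\<dots> = vec.dim (UNIV :: (complex ^ ('m::{finite,wellorder})) set)"
    using hyperplane(2) dimV by (simp add: card_cart_basis)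
  finally have "UNIV \<subseteq> vec.span (insert oh V')"
    using vec.dim_eq_span[of "insert oh V'" UNIV] by simp
  then show ?thesis
    by (auto simp: vec.span_insert span)
qed

lemma negligible_V': "negligible V'"
  using negligible_proper_vec_subspace[OF hyperplane(1)] oh_notin_V' by blast

lemma orbit_point:
  assumes "u \<notin> V'"
  obtains c X where "X \<in> h" "c \<noteq> 0" "u = c *s (mexp X *v oh)"
proof -
  have "u \<noteq> 0"
    using assms hyperplane(1) vec.subspace_0 by blast
  with assms have "cline u \<in> {cline (mexp X *v oh) | X. X \<in> h}"
    unfolding orbit by blast
  then obtain X where X: "X \<in> h" "cline u = cline (mexp X *v oh)"
    by blast
  then obtain c where c: "u = c *s (mexp X *v oh)"
    using cline_eq_imp_smult[OF X(2)[symmetric]] by blast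
  with \<open>u \<noteq> 0\<close> have "c \<noteq> 0"
    by auto
  show ?thesis
    using X(1) \<open>c \<noteq> 0\<close> c by (rule that)
qed

lemma t_vanishes_on_V': "u \<in> V' \<Longrightarrow> t *v u = 0"
proof (cases "u = 0")
  case False
  assume u: "u \<in> V'"
  obtain c where "mexp t *v u = c *s u"
    using cline_eq_imp_smult[OF T_fix[OF u False, symmetric]] by blast
  then show ?thesis
    using strict_upper_mexp_eigenvector[OF upper(1) _ False card_ge_2] by blast
qed simp

lemma t_mv_multiple: "\<exists>\<alpha>. t *v u = \<alpha> *s (t *v oh)"
proof -
  obtain \<alpha> where "u - \<alpha> *s oh \<in> V'"
    using V'_complement by blast
  then have "t *v (u - \<alpha> *s oh) = 0"
    by (rule t_vanishes_on_V')
  then show ?thesis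
    by (auto simp: matrix_vector_mult_diff_distrib vector_scalar_commute)
qed

lemma t_square_zero: "t ** t = 0"
proof -
  obtain \<beta> where \<beta>: "t *v (t *v oh) = \<beta> *s (t *v oh)"
    using t_mv_multiple by blast
  have tt_oh: "t *v (t *v oh) = 0"
  proof (cases "t *v oh = 0")
    case False
    then show ?thesis
      using strict_upper_eigenvalue_zero[OF upper(1) \<beta>] \<beta> by simp
  qed simp
  have "(t ** t) *v u = 0 *v u" for u
    using t_mv_multiple[of u] tt_oh
    by (auto simp: matrix_vector_mul_assoc[symmetric] vector_scalar_commute)
  then show ?thesis
    by (simp add: matrix_eq)
qed

lemma mexp_msc_t_mv_oh: "mexp (msc s t) *v oh = oh + s *s (t *v oh)"
proof -
  have "msc s t ** msc s t = 0"
    by (simp add: msc_matrix_mult_left msc_matrix_mult_right t_square_zero)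
  then show ?thesis
    using mexp_square_zero[OF _ card_ge_2]
    by (simp add: matrix_vector_mult_add_rdistrib msc_matrix_vector_mult)
qed

text \<open>The orbit of o under exp(C t) is the affine line through o in direction t o, which
  lies in the plane spanned by o and t o; its only limit point outside of it is [t o].\<close>
lemma cline_vh: "cline vh = cline (t *v oh)"
proof -
  let ?S = "{cline (oh + s *s (t *v oh)) | s. True}"
  have "cline vh \<in> pclosure ?S" "cline vh \<notin> ?S"
    using v_def by (auto simp: mexp_msc_t_mv_oh)
  then obtain u where u: "cline vh = cline u" "u \<noteq> 0" "u \<in> closure (\<Union> ?S)"
    by (auto simp: pclosure_def)
  have "\<Union> ?S \<subseteq> vec.span {oh, t *v oh}"
  proof (rule subsetI)
    fix z assume "z \<in> \<Union> ?S"
    then obtain s k where "z = k *s (oh + s *s (t *v oh))"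
      by (auto simp: in_cline_iff)
    then show "z \<in> vec.span {oh, t *v oh}"
      by (simp add: vec.span_scale vec.span_add vec.span_base)
  qed
  then have "closure (\<Union> ?S) \<subseteq> vec.span {oh, t *v oh}"
    by (rule closure_minimal) (rule closed_vec_span)
  then have "u \<in> vec.span {oh, t *v oh}"
    using u(3) by blast
  then obtain a b where "u - a *s oh = b *s (t *v oh)"
    by (auto simp: vec.span_insert vec.span_singleton)
  then have ab: "u = a *s oh + b *s (t *v oh)"
    by (simp add: diff_eq_eq add.commute)
  have "a = 0"
  proof (rule ccontr)
    assume "a \<noteq> 0"
    then have "cline u = cline (oh + (b / a) *s (t *v oh))"
      using cline_smult_cancel[of a "oh + (b / a) *s (t *v oh)"]
      by (simp add: ab vector_add_ldistrib vector_smult_assoc)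
    with u(1) have "cline vh \<in> ?S"
      by blast
    with \<open>cline vh \<notin> ?S\<close> show False
      by blast
  qed
  with ab u(2) have "b \<noteq> 0" "u = b *s (t *v oh)"
    by auto
  with u(1) show ?thesis
    by (simp add: cline_smult_cancel)
qed

lemma t_maps_into_line: "maps_into_line vh t"
  unfolding maps_into_line_def
  by (metis t_mv_multiple cline_vh cline_self cline_smult)

lemma mbr_h_generators_maps_into_line:
  assumes "g \<in> h_generators" "g' \<in> h_generators"
  shows "maps_into_line vh (mbr g g')"
proof -
  have "mbr g g' \<in> {0, t} \<or> mbr g' g \<in> {0, t}"
    using assms unfolding h_generators_def by (auto simp: br_xx br_yy br_xy br_xt br_yt split: if_splits)
  moreover have "maps_into_line vh M" if "M \<in> {0, t}" for M
    using that t_maps_into_line maps_into_line_zero[of vh] by auto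
  ultimately have "maps_into_line vh (mbr g g') \<or> maps_into_line vh (mbr g' g)"
    by blast
  then show ?thesis
    using maps_into_line_mbr_commute by blast
qed

lemma mbr_h_maps_into_line: "X \<in> h \<Longrightarrow> Y \<in> h \<Longrightarrow> maps_into_line vh (mbr X Y)"
proof -
  have "h \<subseteq> {Y. maps_into_line vh (mbr g Y)}" if "g \<in> h_generators" for g
    using that mbr_h_generators_maps_into_line
    by (intro h_subset) (auto simp: mbr_add_right mbr_msc_right maps_into_line_zero
        maps_into_line_add maps_into_line_msc)
  then have "h \<subseteq> {X. \<forall>Y\<in>h. maps_into_line vh (mbr X Y)}"
    by (intro h_subset) (auto simp: mbr_add_left mbr_msc_left maps_into_line_zero
        maps_into_line_add maps_into_line_msc)
  then show "X \<in> h \<Longrightarrow> Y \<in> h \<Longrightarrow> maps_into_line vh (mbr X Y)"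
    by blast
qed

lemma h_preserves_line: "X \<in> h \<Longrightarrow> preserves_line vh X"
proof -
  assume X: "X \<in> h"
  obtain c where c: "vh = c *s (t *v oh)"
    using cline_vh cline_self in_cline_iff by metis
  have "X *v (t *v oh) = t *v (X *v oh) + mbr X t *v oh"
    by (simp add: mbr_def matrix_vector_mul_assoc matrix_vector_mult_diff_rdistrib)
  also have "\<dots> \<in> cline vh"
    using t_maps_into_line mbr_h_maps_into_line[OF X t_in_h]
    by (intro cline_add) (auto simp: maps_into_line_def)
  finally show ?thesis
    unfolding preserves_line_def c by (simp add: vector_scalar_commute cline_smult)
qed

lemma h_mv_vh: "X \<in> h \<Longrightarrow> X *v vh = 0"
proof -
  assume X: "X \<in> h"
  obtain \<mu> where \<mu>: "X *v vh = \<mu> *s vh"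
    using h_preserves_line[OF X] by (auto simp: preserves_line_def in_cline_iff)
  then show ?thesis
    using strict_upper_eigenvalue_zero[OF h_strict_upper[OF X] \<mu> vh_nz] by simp
qed

lemma orbit_spans: "\<exists>b \<in> ualg (scaled_exps h). u = b *v oh"
proof -
  have outside: "\<exists>b \<in> ualg (scaled_exps h). u = b *v oh" if u: "u \<notin> V'" for u
  proof -
    obtain c X where "X \<in> h" "c \<noteq> 0" "u = c *s (mexp X *v oh)"
      using orbit_point[OF u] by blast
    then show ?thesis
      by (auto simp: scaled_exps_def msc_matrix_vector_mult intro!: bexI[of _ "msc c (mexp X)"] ualg.gen)
  qed
  show ?thesis
  proof (cases "u \<in> V'")
    case True
    have "u + oh \<notin> V'"
    proof
      assume "u + oh \<in> V'"
      then have "(u + oh) - u \<in> V'"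
        using True hyperplane(1) by (intro vec.subspace_diff)
      then show False
        using oh_notin_V' by simp
    qed
    then obtain b1 where b1: "b1 \<in> ualg (scaled_exps h)" "u + oh = b1 *v oh"
      using outside by blast
    obtain b2 where b2: "b2 \<in> ualg (scaled_exps h)" "oh = b2 *v oh"
      using outside oh_notin_V' by blast
    have "b1 + msc (-1) b2 \<in> ualg (scaled_exps h)"
      using b1 b2 by (intro ualg.add ualg.sc)
    moreover have "u = (b1 + msc (-1) b2) *v oh"
      using b1(2) b2(2) by (simp add: matrix_vector_mult_add_rdistrib msc_matrix_vector_mult algebra_simps)
    ultimately show ?thesis
      by blast
  qed (rule outside)
qed

subsection \<open>Injectivity on w: a dimension count\<close>

text \<open>If D = (sum over k of d k * w_basis k) maps V into C v and d j is nonzero, then w_basis j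
  can be traded for D, which changes exp(X) o only by a multiple of v.\<close>
lemma orbit_without_generator:
  assumes D: "maps_into_line vh (\<Sum>k<2*n. msc (d k) (w_basis k))"
    and j: "j < 2*n" "d j \<noteq> 0" and X: "X \<in> h"
  shows "\<exists>e \<mu>. mexp X *v oh = mexp (\<Sum>k\<in>{..<2*n} - {j}. msc (e k) (w_basis k)) *v oh + \<mu> *s vh"
proof -
  obtain W c where XW: "X = W + msc c t" "W \<in> w"
    using X by (auto simp: h_def)
  obtain ew where W: "W = (\<Sum>k<2*n. msc (ew k) (w_basis k))"
    using w_basis_sum[OF XW(2)] by blast
  define e where "e k = ew k - ew j * d k / d j" for k
  define X0 where "X0 = (\<Sum>k\<in>{..<2*n} - {j}. msc (e k) (w_basis k))"
  have "(W - X0) $ r $ l = msc (ew j / d j) (\<Sum>k<2*n. msc (d k) (w_basis k)) $ r $ l" for r l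
    using sum_eliminate_term[of "{..<2*n}" j d ew "\<lambda>k. w_basis k $ r $ l"] j
    by (simp add: W X0_def e_def msc_def sum_component)
  then have "W - X0 = msc (ew j / d j) (\<Sum>k<2*n. msc (d k) (w_basis k))"
    by (simp add: vec_eq_iff)
  then have "X - X0 = msc (ew j / d j) (\<Sum>k<2*n. msc (d k) (w_basis k)) + msc c t"
    using XW(1) by (simp add: algebra_simps)
  then have "maps_into_line vh (X - X0)"
    using D t_maps_into_line by (simp add: maps_into_line_add maps_into_line_msc)
  then obtain \<mu> where "mexp X *v oh - mexp X0 *v oh = \<mu> *s vh"
    using mexp_mv_diff_in_cline[OF h_mv_vh[OF X]] by (auto simp: in_cline_iff)
  then show ?thesis
    unfolding X0_def by (metis diff_eq_eq add.commute)
qed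

text \<open>The resulting parametrization of the open orbit uses 2n - 1 coefficients, the scalar of
  the line and the multiple of v, i.e. one coordinate fewer than dim V.\<close>
lemma orbit_covered_by_polynomial_image:
  assumes D: "maps_into_line vh (\<Sum>k<2*n. msc (d k) (w_basis k))" and j: "j < 2*n" "d j \<noteq> 0"
  shows "\<exists>f p. polynomial_function (f :: complex ^ ('m::{finite,wellorder}) \<Rightarrow> complex ^ ('m::{finite,wellorder}))
    \<and> - V' \<subseteq> f ` {z. z $ p = 0}"
proof -
  obtain \<iota> :: "nat \<Rightarrow> ('m::{finite,wellorder})" where \<iota>: "bij_betw \<iota> {..<2*n+2} UNIV"
    using ex_bij_betw_nat_finite[of "UNIV :: ('m::{finite,wellorder}) set"] dimV by (auto simp: atLeast0LessThan)
  define K where "K = {..<2*n} - {j}"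
  define f where "f z = (z $ \<iota> (2*n)) *s (mexp (\<Sum>k\<in>K. msc (z $ \<iota> k) (w_basis k)) *v oh)
      + (z $ \<iota> (2*n+1)) *s vh" for z :: "complex ^ ('m::{finite,wellorder})"
  have coord: "polynomial_function (\<lambda>z :: complex ^ ('m::{finite,wellorder}). z $ i)" for i
    using polynomial_function_vec_nth[OF polynomial_function_id] .
  have "polynomial_function (\<lambda>z. mexp (\<Sum>k\<in>K. msc (z $ \<iota> k) (w_basis k)) *v oh)"
    by (intro polynomial_function_matrix_vector_mult polynomial_function_mexp polynomial_function_sum
        polynomial_function_msc coord polynomial_function_const) (simp add: K_def)
  then have "polynomial_function f"
    unfolding f_def
    by (intro polynomial_function_vec_lambda)
       (auto intro!: polynomial_function_add polynomial_function_complex_mult coord polynomial_function_vec_nth)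
  moreover have "- V' \<subseteq> f ` {z. z $ \<iota> j = 0}"
  proof
    fix u assume "u \<in> - V'"
    then obtain c X where X: "X \<in> h" and u: "u = c *s (mexp X *v oh)"
      using orbit_point by blast
    obtain e \<mu> where e: "mexp X *v oh = mexp (\<Sum>k\<in>K. msc (e k) (w_basis k)) *v oh + \<mu> *s vh"
      using orbit_without_generator[OF D j X] unfolding K_def by blast
    define F where "F k = (if k \<in> K then e k else if k = 2*n then c else if k = 2*n+1 then c * \<mu> else 0)"
      for k
    define z where "z = (\<chi> i. F (inv_into {..<2*n+2} \<iota> i))"
    have z: "z $ \<iota> k = F k" if "k < 2*n+2" for k
      using vec_lambda_inv_into_nth[OF \<iota>] that by (simp add: z_def)
    have "(\<Sum>k\<in>K. msc (z $ \<iota> k) (w_basis k)) = (\<Sum>k\<in>K. msc (e k) (w_basis k))"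
      by (rule sum.cong) (auto simp: z F_def K_def)
    then have "f z = u"
      using z[of "2*n"] z[of "2*n+1"]
      by (simp add: f_def F_def K_def u e vector_add_ldistrib vector_smult_assoc)
    moreover have "z $ \<iota> j = 0"
      using z[of j] j by (simp add: F_def K_def)
    ultimately show "u \<in> f ` {z. z $ \<iota> j = 0}"
      by blast
  qed
  ultimately show ?thesis
    by blast
qed

lemma w_maps_into_line_eq_zero:
  assumes D: "D \<in> w" "maps_into_line vh D"
  shows "D = 0"
proof (rule ccontr)
  assume "D \<noteq> 0"
  obtain d where d: "D = (\<Sum>k<2*n. msc (d k) (w_basis k))"
    using w_basis_sum[OF D(1)] by blast
  have "\<exists>j<2*n. d j \<noteq> 0"
  proof (rule ccontr)
    assume "\<not> ?thesis"
    then have "D = 0"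
      by (simp add: d)
    with \<open>D \<noteq> 0\<close> show False
      by simp
  qed
  then obtain j where j: "j < 2*n" "d j \<noteq> 0"
    by blast
  obtain f :: "complex ^ ('m::{finite,wellorder}) \<Rightarrow> complex ^ ('m::{finite,wellorder})" and p
    where f: "polynomial_function f" "- V' \<subseteq> f ` {z. z $ p = 0}"
    using orbit_covered_by_polynomial_image[OF D(2)[unfolded d] j] by blast
  have "negligible (f ` {z. z $ p = 0} \<union> V')"
    using negligible_polynomial_image_coordinate_hyperplane[OF f(1)] negligible_V'
    by (rule negligible_Un)
  moreover have "f ` {z. z $ p = 0} \<union> V' = UNIV"
    using f(2) by blast
  ultimately show False
    by simp
qed

lemma theta_t: "theta vh t = ezero vh"
  using theta_eq_ezero_iff[OF h_preserves_line[OF t_in_h]] t_maps_into_line by simp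

lemma theta_inj_on_w: "inj_on (theta vh) w"
proof (rule inj_onI)
  fix A B assume A: "A \<in> w" and B: "B \<in> w" and eq: "theta vh A = theta vh B"
  have "preserves_line vh A" "preserves_line vh B"
    using A B w_subset_h h_preserves_line by blast+
  with eq have "maps_into_line vh (A - B)"
    using theta_eq_iff by blast
  then have "A - B = 0"
    by (rule w_maps_into_line_eq_zero[OF w_diff[OF A B]])
  then show "A = B"
    by simp
qed

lemma theta_image_alg_h: "theta vh ` alg h = ealg vh (theta vh ` w)"
proof -
  have "theta vh ` h = theta vh ` w"
  proof
    show "theta vh ` h \<subseteq> theta vh ` w"
    proof
      fix f assume "f \<in> theta vh ` h"
      then obtain W c where W: "W \<in> w" "f = theta vh (W + msc c t)"
        by (auto simp: h_def)
      have "W \<in> h"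
        using W(1) w_subset_h by blast
      then have "preserves_line vh (W + msc c t)" "preserves_line vh W"
        using preserves_line_add[OF _ preserves_line_msc] h_preserves_line t_in_h by blast+
      moreover have "maps_into_line vh (W + msc c t - W)"
        using t_maps_into_line maps_into_line_msc by simp
      ultimately have "theta vh (W + msc c t) = theta vh W"
        using theta_eq_iff by blast
      with W show "f \<in> theta vh ` w"
        by simp
    qed
  qed (use w_subset_h in blast)
  then show ?thesis
    using theta_image_alg[of h vh] h_preserves_line by simp
qed

lemma theta_vanishes_on_ker_ev:
  "a \<in> ualg (scaled_exps h) \<Longrightarrow> a *v oh = 0 \<Longrightarrow> theta vh a = ezero vh"
  using theta_vanishes_on_annihilator[OF h_preserves_line mbr_h_maps_into_line orbit_spans] .

end

theorem lemma3p1: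
  fixes n :: nat
    and x y :: "nat \<Rightarrow> ('m::{finite,wellorder}) cmat"
    and t :: "('m::{finite,wellorder}) cmat"
    and w h :: "('m::{finite,wellorder}) cmat set"
    and V' :: "(complex ^ ('m::{finite,wellorder})) set"
    and oh vh :: "complex ^ ('m::{finite,wellorder})"
  assumes n: "n \<ge> 1" and dimV: "CARD('m) = 2 * n + 2"
    \<comment> \<open>h = w + C t is a Heisenberg Lie algebra of strictly upper triangular matrices,
        presented by a symplectic basis x_i, y_i of w and the central element t\<close>
    and t_nz: "t \<noteq> 0"
    and upper: "strict_upper t" "\<And>i. i < n \<Longrightarrow> strict_upper (x i)"
        "\<And>i. i < n \<Longrightarrow> strict_upper (y i)"
    and br_xx: "\<And>i j. i < n \<Longrightarrow> j < n \<Longrightarrow> mbr (x i) (x j) = 0"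
    and br_yy: "\<And>i j. i < n \<Longrightarrow> j < n \<Longrightarrow> mbr (y i) (y j) = 0"
    and br_xy: "\<And>i j. i < n \<Longrightarrow> j < n \<Longrightarrow> mbr (x i) (y j) = (if i = j then t else 0)"
    and br_xt: "\<And>i. i < n \<Longrightarrow> mbr (x i) t = 0"
    and br_yt: "\<And>i. i < n \<Longrightarrow> mbr (y i) t = 0"
    and w_def: "w = {(\<Sum>i<n. msc (a i) (x i) + msc (b i) (y i)) | a b. True}"
    and h_def: "h = {X + msc c t | X c. X \<in> w}"
    \<comment> \<open>V' is a hyperplane, and the H-orbit of o = [oh] is exactly P V minus P V'\<close>
    and hyp: "vec.subspace V'" "vec.dim V' = CARD('m) - 1"
    and oh_nz: "oh \<noteq> 0"
    and orbit: "{cline (mexp X *v oh) | X. X \<in> h} = {cline u | u. u \<noteq> 0 \<and> u \<notin> V'}"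
    \<comment> \<open>T = exp t fixes every point of P V'\<close>
    and T_fix: "\<And>u. u \<in> V' \<Longrightarrow> u \<noteq> 0 \<Longrightarrow> cline (mexp t *v u) = cline u"
    \<comment> \<open>v = [vh] is the point closure(I.o) minus I.o\<close>
    and vh_nz: "vh \<noteq> 0"
    and v_def: "pclosure {cline (mexp (msc s t) *v oh) | s. True}
                 - {cline (mexp (msc s t) *v oh) | s. True} = {cline vh}"
  shows "theta vh t = ezero vh
       \<and> inj_on (theta vh) w
       \<and> theta vh ` alg h = ealg vh (theta vh ` w)
       \<and> (\<forall>a \<in> ualg {msc c (mexp X) | c X. c \<noteq> 0 \<and> X \<in> h}.
             a *v oh = 0 \<longrightarrow> theta vh a = ezero vh)"
proof -
  interpret heisenberg_structure n x y t w h V' oh vh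
    by unfold_locales (fact assms)+
  show ?thesis
    using theta_t theta_inj_on_w theta_image_alg_h theta_vanishes_on_ker_ev
    unfolding scaled_exps_def by blast
qed

end
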